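(* Let $K$ be a field, $S=K[x_1,\ldots,x_n]$, $I\subset S$ a monomial ideal with $I\ne S$, with $\mathbb{Z}^n$-graded minimal free resolution of $S/I$, multidegrees $a_{ij}$ and scalar matrices $\lambda^{(i)}$ as in the context. Let $1\le i\le p$ and let $\mu=(\mu_1,\ldots,\mu_{\beta_i})^T\in K^{\beta_i}$ with $\lambda^{(i)}\mu=0$. Let $k_1<\cdots<k_r$ be the indices with $\mu_{k_t}\ne0$. Then there exists $\rho=(\rho_1,\ldots,\rho_{\beta_{i+1}})^T\in K^{\beta_{i+1}}$ with $\lambda^{(i+1)}\rho=\mu$ and such that $x^{a_{i+1,j}}$ divides $\operatorname{lcm}(x^{a_{ik_1}},\ldots,x^{a_{ik_r}})$ for all $j$ with $\rho_j\ne0$.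
   Context: For $a\in\mathbb{N}^n$, $x^a=x_1^{a(1)}\cdots x_n^{a(n)}$. Let $0\to F_p\to\cdots\to F_1\to F_0\to S/I\to 0$ be the $\mathbb{Z}^n$-graded minimal free resolution of $S/I$ with differential $\partial$, where $F_0=S$ with basis $f_{01}$ of degree $0$, and $F_i=\bigoplus_{j=1}^{\beta_i}Sf_{ij}$ with $f_{ij}$ homogeneous of multidegree $a_{ij}\in\mathbb{N}^n$; set $\beta_{p+1}=0$ and $\lambda^{(p+1)}$ the empty matrix. Write $\partial(f_{ij})=\sum_k\lambda^{(i)}_{kj}x^{a_{ij}-a_{i-1,k}}f_{i-1,k}$ with $\lambda^{(i)}_{kj}\in K$, where $\lambda^{(i)}_{kj}=0$ whenever $a_{ij}-a_{i-1,k}\notin\mathbb{N}^n$; $\lambda^{(i)}=(\lambda^{(i)}_{kj})\in K^{\beta_{i-1}\times\beta_i}$. The lcm of an empty family is $1$. *)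

theory Defs
  imports "HOL-Library.Poly_Mapping"
begin

text \<open>Polynomials over K in variables x_0, x_1, ... as finitely supported maps from
 exponent vectors (nat =>0 nat) to coefficients.  S = K[x_0..x_{n-1}] is the subset
 of polynomials only involving the variables with index < n.\<close>

type_synonym 'k mpoly = "(nat \<Rightarrow>\<^sub>0 nat) \<Rightarrow>\<^sub>0 'k"

definition expvec :: "nat \<Rightarrow> (nat \<Rightarrow>\<^sub>0 nat) \<Rightarrow> bool" where
  "expvec n a \<longleftrightarrow> Poly_Mapping.keys a \<subseteq> {..<n}"

definition in_S :: "nat \<Rightarrow> 'k::zero mpoly \<Rightarrow> bool" where
  "in_S n f \<longleftrightarrow> (\<forall>m\<in>Poly_Mapping.keys f. expvec n m)"

definition xpow :: "(nat \<Rightarrow>\<^sub>0 nat) \<Rightarrow> 'k::{zero,one} mpoly" where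
  "xpow a = Poly_Mapping.single a 1"

definition scal :: "'k::zero \<Rightarrow> 'k mpoly" where
  "scal c = Poly_Mapping.single 0 c"

definition exp_le :: "(nat \<Rightarrow>\<^sub>0 nat) \<Rightarrow> (nat \<Rightarrow>\<^sub>0 nat) \<Rightarrow> bool" where
  "exp_le a b \<longleftrightarrow> (\<forall>v. Poly_Mapping.lookup a v \<le> Poly_Mapping.lookup b v)"

definition monomial_ideal_gen :: "nat \<Rightarrow> (nat \<Rightarrow>\<^sub>0 nat) set \<Rightarrow> 'k::comm_ring_1 mpoly set" where
  "monomial_ideal_gen n G = {f. \<exists>F q. finite F \<and> F \<subseteq> G \<and> (\<forall>g\<in>F. in_S n (q g))
       \<and> f = (\<Sum>g\<in>F. q g * xpow g)}"

definition monomial_ideal :: "nat \<Rightarrow> 'k::comm_ring_1 mpoly set \<Rightarrow> bool" where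
  "monomial_ideal n I \<longleftrightarrow> (\<exists>G. (\<forall>g\<in>G. expvec n g) \<and> I = monomial_ideal_gen n G)"

text \<open>lcm of the monomials x^a, a in A (A finite); lcm of the empty family is 1\<close>
definition mono_lcm :: "(nat \<Rightarrow>\<^sub>0 nat) set \<Rightarrow> 'k::{zero,one} mpoly" where
  "mono_lcm A = xpow (Abs_poly_mapping (\<lambda>v. Max (insert 0 ((\<lambda>a. Poly_Mapping.lookup a v) ` A))))"

text \<open>The free module F_i = S^{beta i}, elements are coordinate vectors (nat => poly),
  zero outside the index range {..< beta i} (0-based basis indices).\<close>
definition free_mod :: "nat \<Rightarrow> nat \<Rightarrow> (nat \<Rightarrow> 'k::zero mpoly) set" where
  "free_mod n b = {v. (\<forall>j<b. in_S n (v j)) \<and> (\<forall>j\<ge>b. v j = 0)}"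

definition diff :: "(nat \<Rightarrow> nat) \<Rightarrow> (nat \<Rightarrow> nat \<Rightarrow> (nat \<Rightarrow>\<^sub>0 nat)) \<Rightarrow> (nat \<Rightarrow> nat \<Rightarrow> nat \<Rightarrow> 'k::comm_ring_1)
    \<Rightarrow> nat \<Rightarrow> (nat \<Rightarrow> 'k mpoly) \<Rightarrow> (nat \<Rightarrow> 'k mpoly)" where
  "diff \<beta> a lam i v = (\<lambda>k. if k < \<beta> (i - 1) then
       (\<Sum>j<\<beta> i. scal (lam i k j) * xpow (a i j - a (i - 1) k) * v j) else 0)"

definition graded_min_free_res ::
  "nat \<Rightarrow> 'k::field mpoly set \<Rightarrow> nat \<Rightarrow> (nat \<Rightarrow> nat) \<Rightarrow> (nat \<Rightarrow> nat \<Rightarrow> (nat \<Rightarrow>\<^sub>0 nat))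
     \<Rightarrow> (nat \<Rightarrow> nat \<Rightarrow> nat \<Rightarrow> 'k) \<Rightarrow> bool" where
  "graded_min_free_res n I p \<beta> a lam \<longleftrightarrow>
     \<beta> 0 = 1 \<and> a 0 0 = 0 \<and> (\<forall>i>p. \<beta> i = 0)
   \<and> (\<forall>i j. j < \<beta> i \<longrightarrow> expvec n (a i j))
   \<comment> \<open>homogeneity of the differential\<close>
   \<and> (\<forall>i k j. 1 \<le> i \<longrightarrow> k < \<beta> (i - 1) \<longrightarrow> j < \<beta> i \<longrightarrow>
        \<not> exp_le (a (i - 1) k) (a i j) \<longrightarrow> lam i k j = 0)
   \<comment> \<open>minimality: d(F_i) contained in m F_{i-1}\<close>
   \<and> (\<forall>i k j. 1 \<le> i \<longrightarrow> k < \<beta> (i - 1) \<longrightarrow> j < \<beta> i \<longrightarrow>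
        a i j = a (i - 1) k \<longrightarrow> lam i k j = 0)
   \<comment> \<open>exactness at F_i for i >= 1 (at F_p this is injectivity, as F_{p+1} = 0)\<close>
   \<and> (\<forall>i\<ge>1. {v \<in> free_mod n (\<beta> i). diff \<beta> a lam i v = (\<lambda>_. 0)}
              = diff \<beta> a lam (i + 1) ` free_mod n (\<beta> (i + 1)))
   \<comment> \<open>augmentation: image of d_1 in F_0 = S is I, so coker d_1 = S/I\<close>
   \<and> (\<lambda>w. w 0) ` diff \<beta> a lam 1 ` free_mod n (\<beta> 1) = I"

end

theory Submission imports Defs begin

text \<open>Let M be the exponent of the lcm of the x^a_ik with \<mu>_k \<noteq> 0. The vector
  v = \<Sum>_k \<mu>_k x^(M - a_ik) f_ik is homogeneous of multidegree M and, since \<lambda>^(i) \<mu> = 0,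
  a cycle, hence v = d(w) by exactness. Multiplying the k-th coordinate by x^a_ik turns the
  differential into the scalar matrix \<lambda>^(i+1) acting on the vector (x^a_(i+1)j w_j)_j, so
  comparing coefficients of x^M shows that \<rho>_j, the coefficient of x^M in x^a_(i+1)j w_j,
  satisfies \<lambda>^(i+1) \<rho> = \<mu>; and \<rho>_j \<noteq> 0 forces a_(i+1)j \<le> M.\<close>

lemma exp_le_add_diff: "exp_le a b \<Longrightarrow> a + (b - a) = b"
  unfolding exp_le_def by (intro poly_mapping_eqI) (simp add: lookup_add lookup_minus)

lemma eq_add_iff_exp_le: "e = d + q \<longleftrightarrow> exp_le d e \<and> q = e - d"
  unfolding exp_le_def by (auto simp: poly_mapping_eqI lookup_add lookup_minus)

lemma expvec_diff: "expvec n a \<Longrightarrow> expvec n (a - b)"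
  unfolding expvec_def by (auto simp: in_keys_iff lookup_minus subset_iff)

lemma lookup_single_mult:
  fixes f :: "'k::comm_semiring_1 mpoly"
  shows "Poly_Mapping.lookup (Poly_Mapping.single d c * f) e
     = (if exp_le d e then c * Poly_Mapping.lookup f (e - d) else 0)"
proof -
  have "Poly_Mapping.lookup (Poly_Mapping.single d c * f) e
     = (\<Sum>l. (c * (\<Sum>q. Poly_Mapping.lookup f q when e = l + q)) when d = l)"
    by (simp add: lookup_mult lookup_single when_mult)
  also have "\<dots> = c * (\<Sum>q. Poly_Mapping.lookup f q when e = d + q)"
    by simp
  also have "\<dots> = (if exp_le d e then c * Poly_Mapping.lookup f (e - d) else 0)"
    by (simp add: eq_add_iff_exp_le when_def)
  finally show ?thesis .
qed

lemma lookup_xpow_mult: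
  "Poly_Mapping.lookup (xpow d * f) e
     = (if exp_le d e then Poly_Mapping.lookup (f :: 'k::comm_semiring_1 mpoly) (e - d) else 0)"
  unfolding xpow_def by (simp add: lookup_single_mult)

lemma lookup_scal_mult:
  "Poly_Mapping.lookup (scal c * f) e = c * Poly_Mapping.lookup (f :: 'k::comm_semiring_1 mpoly) e"
  unfolding scal_def by (simp add: lookup_single_mult exp_le_def)

lemma xpow_add: "xpow (a + b) = (xpow a * xpow b :: 'k::comm_semiring_1 mpoly)"
  unfolding xpow_def by (simp add: mult_single)

lemma xpow_dvd_xpow: "exp_le a b \<Longrightarrow> (xpow a :: 'k::comm_semiring_1 mpoly) dvd xpow b"
  by (metis exp_le_add_diff xpow_add dvd_triv_left)

lemma xpow_mult_eq_0_iff: "xpow d * f = 0 \<longleftrightarrow> (f :: 'k::comm_semiring_1 mpoly) = 0"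
proof
  assume "xpow d * f = 0"
  then have "Poly_Mapping.lookup (xpow d * f) (d + e) = 0" for e by simp
  then show "f = 0"
    by (intro poly_mapping_eqI) (simp add: lookup_xpow_mult exp_le_def lookup_add)
qed simp

lemma scal_mult: "scal (c * d) = (scal c * scal d :: 'k::comm_semiring_1 mpoly)"
  unfolding scal_def by (simp add: mult_single)

lemma scal_sum: "scal (\<Sum>k\<in>A. f k) = (\<Sum>k\<in>A. scal (f k) :: 'k::comm_semiring_1 mpoly)"
  unfolding scal_def by (induction A rule: infinite_finite_induct) (simp_all add: single_add)

lemma in_S_scal_xpow: "expvec n e \<Longrightarrow> in_S n (scal c * xpow e :: 'k::comm_semiring_1 mpoly)"
  unfolding in_S_def scal_def xpow_def by (auto simp: mult_single split: if_splits)

definition exp_lcm :: "(nat \<Rightarrow>\<^sub>0 nat) set \<Rightarrow> nat \<Rightarrow>\<^sub>0 nat" where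
  "exp_lcm A = Abs_poly_mapping (\<lambda>v. Max (insert 0 ((\<lambda>a. Poly_Mapping.lookup a v) ` A)))"

lemma mono_lcm_eq_xpow_exp_lcm: "mono_lcm A = xpow (exp_lcm A)"
  unfolding mono_lcm_def exp_lcm_def ..

lemma lookup_exp_lcm:
  assumes "finite A"
  shows "Poly_Mapping.lookup (exp_lcm A) v = Max (insert 0 ((\<lambda>a. Poly_Mapping.lookup a v) ` A))"
proof -
  let ?g = "\<lambda>v. Max (insert 0 ((\<lambda>a. Poly_Mapping.lookup a v) ` A))"
  have "{v. ?g v \<noteq> 0} \<subseteq> (\<Union>a\<in>A. Poly_Mapping.keys a)"
  proof
    fix v
    assume "v \<in> {v. ?g v \<noteq> 0}"
    moreover have "?g v \<in> insert 0 ((\<lambda>a. Poly_Mapping.lookup a v) ` A)"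
      using assms by (intro Max_in) auto
    ultimately obtain a where "a \<in> A" "Poly_Mapping.lookup a v \<noteq> 0"
      by auto
    then show "v \<in> (\<Union>a\<in>A. Poly_Mapping.keys a)"
      by (auto simp: in_keys_iff)
  qed
  then have "finite {v. ?g v \<noteq> 0}"
    by (rule finite_subset) (simp add: assms)
  then show ?thesis
    unfolding exp_lcm_def by (simp add: Abs_poly_mapping_inverse)
qed

lemma exp_le_exp_lcm: "finite A \<Longrightarrow> a \<in> A \<Longrightarrow> exp_le a (exp_lcm A)"
  unfolding exp_le_def by (simp add: lookup_exp_lcm)

lemma expvec_exp_lcm: "finite A \<Longrightarrow> \<forall>a\<in>A. expvec n a \<Longrightarrow> expvec n (exp_lcm A)"
  unfolding expvec_def
  by (auto simp: in_keys_iff lookup_exp_lcm Max_eq_iff subset_iff)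

definition diff_homogeneous ::
    "(nat \<Rightarrow> nat) \<Rightarrow> (nat \<Rightarrow> nat \<Rightarrow> (nat \<Rightarrow>\<^sub>0 nat)) \<Rightarrow> (nat \<Rightarrow> nat \<Rightarrow> nat \<Rightarrow> 'k::zero) \<Rightarrow> nat \<Rightarrow> bool" where
  "diff_homogeneous \<beta> a lam i \<longleftrightarrow> (\<forall>k j. k < \<beta> (i - 1) \<longrightarrow> j < \<beta> i \<longrightarrow>
      lam i k j \<noteq> 0 \<longrightarrow> exp_le (a (i - 1) k) (a i j))"

lemma graded_min_free_res_homogeneous:
  "graded_min_free_res n I p \<beta> a lam \<Longrightarrow> 1 \<le> i \<Longrightarrow> diff_homogeneous \<beta> a lam i"
  unfolding graded_min_free_res_def diff_homogeneous_def by metis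

lemma graded_min_free_res_exact:
  assumes "graded_min_free_res n I p \<beta> a lam" and "1 \<le> i"
    and "v \<in> free_mod n (\<beta> i)" and "diff \<beta> a lam i v = (\<lambda>_. 0)"
  obtains w where "w \<in> free_mod n (\<beta> (i + 1))" and "v = diff \<beta> a lam (i + 1) w"
proof -
  have "\<forall>i\<ge>1. {v \<in> free_mod n (\<beta> i). diff \<beta> a lam i v = (\<lambda>_. 0)}
      = diff \<beta> a lam (i + 1) ` free_mod n (\<beta> (i + 1))"
    using assms(1) unfolding graded_min_free_res_def by (elim conjE) assumption
  with assms(2-4) that show ?thesis by blast
qed

lemma xpow_mult_diff:
  fixes lam :: "nat \<Rightarrow> nat \<Rightarrow> nat \<Rightarrow> 'k::comm_ring_1"
  assumes "diff_homogeneous \<beta> a lam i" and "k < \<beta> (i - 1)"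
  shows "xpow (a (i - 1) k) * diff \<beta> a lam i w k
     = (\<Sum>j<\<beta> i. scal (lam i k j) * (xpow (a i j) * w j))"
proof -
  have "xpow (a (i - 1) k) * (scal (lam i k j) * xpow (a i j - a (i - 1) k) * w j)
      = scal (lam i k j) * (xpow (a i j) * w j)" if "j < \<beta> i" for j
  proof (cases "lam i k j = 0")
    case False
    with assms that have "exp_le (a (i - 1) k) (a i j)"
      unfolding diff_homogeneous_def by blast
    then have "xpow (a (i - 1) k) * xpow (a i j - a (i - 1) k) = (xpow (a i j) :: 'k mpoly)"
      by (metis exp_le_add_diff xpow_add)
    then show ?thesis by (metis mult.assoc mult.left_commute)
  qed (simp add: scal_def)
  with assms(2) show ?thesis
    unfolding diff_def by (simp add: sum_distrib_left)
qed

lemma diff_homogeneous_cycle: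
  fixes lam :: "nat \<Rightarrow> nat \<Rightarrow> nat \<Rightarrow> 'k::comm_ring_1"
  assumes "diff_homogeneous \<beta> a lam i"
    and "\<forall>k<\<beta> i. \<mu> k \<noteq> 0 \<longrightarrow> exp_le (a i k) M"
    and "\<forall>k<\<beta> (i - 1). (\<Sum>j<\<beta> i. lam i k j * \<mu> j) = 0"
  shows "diff \<beta> a lam i (\<lambda>k. if k < \<beta> i then scal (\<mu> k) * xpow (M - a i k) else 0) = (\<lambda>_. 0)"
    (is "diff \<beta> a lam i ?v = _")
proof
  fix l
  show "diff \<beta> a lam i ?v l = 0"
  proof (cases "l < \<beta> (i - 1)")
    case True
    have shift: "xpow (a i k) * ?v k = scal (\<mu> k) * xpow M" if "k < \<beta> i" for k
    proof (cases "\<mu> k = 0")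
      case False
      with assms(2) that have "exp_le (a i k) M" by blast
      then have "xpow (a i k) * xpow (M - a i k) = (xpow M :: 'k mpoly)"
        by (simp add: exp_le_add_diff flip: xpow_add)
      with that show ?thesis by (simp add: mult.left_commute)
    qed (simp add: scal_def)
    have "xpow (a (i - 1) l) * diff \<beta> a lam i ?v l
        = (\<Sum>k<\<beta> i. scal (lam i l k) * (xpow (a i k) * ?v k))"
      by (rule xpow_mult_diff[OF assms(1) True])
    also have "\<dots> = (\<Sum>k<\<beta> i. scal (lam i l k) * (scal (\<mu> k) * xpow M))"
      using shift by (intro sum.cong) simp_all
    also have "\<dots> = scal (\<Sum>k<\<beta> i. lam i l k * \<mu> k) * xpow M"
      by (simp add: scal_mult scal_sum sum_distrib_right mult.assoc)
    also have "\<dots> = 0" using assms(3) True by (simp add: scal_def)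
    finally show ?thesis by (simp add: xpow_mult_eq_0_iff)
  qed (simp add: diff_def)
qed

lemma lookup_xpow_mult_diff:
  fixes lam :: "nat \<Rightarrow> nat \<Rightarrow> nat \<Rightarrow> 'k::comm_ring_1"
  assumes "diff_homogeneous \<beta> a lam (i + 1)" and "k < \<beta> i"
  shows "Poly_Mapping.lookup (xpow (a i k) * diff \<beta> a lam (i + 1) w k) M
     = (\<Sum>j<\<beta> (i + 1). lam (i + 1) k j * Poly_Mapping.lookup (xpow (a (i + 1) j) * w j) M)"
  using xpow_mult_diff[of \<beta> a lam "i + 1" k w] assms
  by (simp add: lookup_sum lookup_scal_mult)

theorem lemma1p8:
  fixes n :: nat and I :: "'k::field mpoly set" and p :: nat
    and \<beta> :: "nat \<Rightarrow> nat" and a :: "nat \<Rightarrow> nat \<Rightarrow> (nat \<Rightarrow>\<^sub>0 nat)"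
    and lam :: "nat \<Rightarrow> nat \<Rightarrow> nat \<Rightarrow> 'k"
    and i :: nat and \<mu> :: "nat \<Rightarrow> 'k"
  assumes "monomial_ideal n I"
    and "I \<noteq> {f. in_S n f}"
    and "graded_min_free_res n I p \<beta> a lam"
    and "1 \<le> i" and "i \<le> p"
    and "\<forall>j\<ge>\<beta> i. \<mu> j = 0"
    and "\<forall>k<\<beta> (i - 1). (\<Sum>j<\<beta> i. lam i k j * \<mu> j) = 0"
  shows "\<exists>\<rho> :: nat \<Rightarrow> 'k. (\<forall>j\<ge>\<beta> (i + 1). \<rho> j = 0)
     \<and> (\<forall>k<\<beta> i. (\<Sum>j<\<beta> (i + 1). lam (i + 1) k j * \<rho> j) = \<mu> k)
     \<and> (\<forall>j<\<beta> (i + 1). \<rho> j \<noteq> 0 \<longrightarrow>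
          xpow (a (i + 1) j) dvd (mono_lcm (a i ` {k. k < \<beta> i \<and> \<mu> k \<noteq> 0}) :: 'k mpoly))"
proof -
  define M where "M = exp_lcm (a i ` {k. k < \<beta> i \<and> \<mu> k \<noteq> 0})"
  have le_M: "\<forall>k<\<beta> i. \<mu> k \<noteq> 0 \<longrightarrow> exp_le (a i k) M"
    unfolding M_def by (auto intro: exp_le_exp_lcm)
  have "expvec n M"
    using assms(3) unfolding M_def graded_min_free_res_def by (auto intro: expvec_exp_lcm)
  define v where "v = (\<lambda>k. if k < \<beta> i then scal (\<mu> k) * xpow (M - a i k) else (0 :: 'k mpoly))"
  have "v \<in> free_mod n (\<beta> i)"
    using \<open>expvec n M\<close> unfolding v_def free_mod_def by (auto intro: in_S_scal_xpow expvec_diff)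
  moreover have "diff \<beta> a lam i v = (\<lambda>_. 0)"
    unfolding v_def using graded_min_free_res_homogeneous[OF assms(3,4)] le_M assms(7)
    by (rule diff_homogeneous_cycle)
  ultimately obtain w where v_eq: "v = diff \<beta> a lam (i + 1) w"
    by (rule graded_min_free_res_exact[OF assms(3,4)])
  have coeff_v: "Poly_Mapping.lookup (xpow (a i k) * v k) M = \<mu> k" if "k < \<beta> i" for k
  proof (cases "exp_le (a i k) M")
    case True
    with that show ?thesis
      by (simp add: v_def lookup_xpow_mult lookup_scal_mult) (simp add: xpow_def)
  next
    case False
    with that le_M show ?thesis by (auto simp: lookup_xpow_mult)
  qed
  define \<rho> where "\<rho> = (\<lambda>j. if j < \<beta> (i + 1) then Poly_Mapping.lookup (xpow (a (i + 1) j) * w j) M else 0)"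
  have "\<forall>k<\<beta> i. (\<Sum>j<\<beta> (i + 1). lam (i + 1) k j * \<rho> j) = \<mu> k"
    using lookup_xpow_mult_diff[OF graded_min_free_res_homogeneous[OF assms(3)]] coeff_v
    unfolding \<rho>_def v_eq by simp
  moreover have "xpow (a (i + 1) j) dvd (xpow M :: 'k mpoly)" if "\<rho> j \<noteq> 0" for j
    using that unfolding \<rho>_def by (auto simp: lookup_xpow_mult split: if_splits intro: xpow_dvd_xpow)
  ultimately show ?thesis
    unfolding mono_lcm_eq_xpow_exp_lcm M_def[symmetric] by (intro exI[of _ \<rho>]) (simp add: \<rho>_def)
qed

end
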